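(* For $(a,b)\in\mathscr T^q$ the following are equivalent: (1) $(a,b)$ is periodic for $\mathrm{BCZ}_q$, i.e. $\mathrm{BCZ}_q^n(a,b)=(a,b)$ for some $n\ge1$; (2) there exists $s_0>0$ with $h_{s_0}g_{a,b}\Lambda_q=g_{a,b}\Lambda_q$; (3) $b/a=x/y$ for some $(x,y)^T\in\Lambda_q$ with $y\neq0$ (equivalently, since $\Lambda_q$ is symmetric about $y=x$, $b/a$ is the slope of some vector of $\Lambda_q$).
   Context: Fix an integer $q\ge3$, let $\lambda_q=2\cos(\pi/q)$, and let $G_q\subset \mathrm{SL}(2,\mathbb R)$ be the Hecke triangle group generated by $S=\begin{pmatrix}0&-1\\1&0\end{pmatrix}$ and $T_q=\begin{pmatrix}1&\lambda_q\\0&1\end{pmatrix}$, acting linearly on $\mathbb R^2$; $\Lambda_q=G_q(1,0)^T$, $A\Lambda_q=\{A\mathbf v:\mathbf v\in\Lambda_q\}$. $h_s=\begin{pmatrix}1&0\\-s&1\end{pmatrix}$, $g_{a,b}=\begin{pmatrix}a&b\\0&a^{-1}\end{pmatrix}$, $S_1=\{(x,y)^T:0<x\le1\}$. The $G_q$-Farey triangle is $\mathscr T^q=\{(a,b):0<a\le1,\ 1-\lambda_qa<b\le1\}$. Facts (established earlier in the paper): for every $(a,b)\in\mathscr T^q$, $g_{a,b}\Lambda_q\cap S_1$ contains a vector of smallest positive slope, denoted $R_q(a,b)$; and whenever $A\Lambda_q$ contains a horizontal vector $(c,0)^T$ with $0<c\le1$ there is a unique $(a',b')\in\mathscr T^q$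 with $A\Lambda_q=g_{a',b'}\Lambda_q$. The $G_q$-BCZ map $\mathrm{BCZ}_q:\mathscr T^q\to\mathscr T^q$ sends $(a,b)$ to the unique $(c,d)\in\mathscr T^q$ with $h_{R_q(a,b)}g_{a,b}\Lambda_q=g_{c,d}\Lambda_q$. *)

theory Defs
  imports "HOL-Analysis.Analysis"
begin

definition mat2 :: "real \<Rightarrow> real \<Rightarrow> real \<Rightarrow> real \<Rightarrow> real^2^2" where
  "mat2 a b c d = (\<chi> i j. if i = 1 then (if j = 1 then a else b) else (if j = 1 then c else d))"

definition vec2 :: "real \<Rightarrow> real \<Rightarrow> real^2" where
  "vec2 x y = (\<chi> i. if i = 1 then x else y)"

definition lambda_q :: "nat \<Rightarrow> real" where
  "lambda_q q = 2 * cos (pi / real q)"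

definition S_mat :: "real^2^2" where "S_mat = mat2 0 (-1) 1 0"

definition T_mat :: "nat \<Rightarrow> real^2^2" where "T_mat q = mat2 1 (lambda_q q) 0 1"

inductive_set G_q :: "nat \<Rightarrow> (real^2^2) set" for q :: nat where
  G_id: "mat 1 \<in> G_q q"
| G_S: "M \<in> G_q q \<Longrightarrow> S_mat ** M \<in> G_q q"
| G_Sinv: "M \<in> G_q q \<Longrightarrow> matrix_inv S_mat ** M \<in> G_q q"
| G_T: "M \<in> G_q q \<Longrightarrow> T_mat q ** M \<in> G_q q"
| G_Tinv: "M \<in> G_q q \<Longrightarrow> matrix_inv (T_mat q) ** M \<in> G_q q"

definition Lambda_q :: "nat \<Rightarrow> (real^2) set" where
  "Lambda_q q = {M *v vec2 1 0 | M. M \<in> G_q q}"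

definition mat_img :: "real^2^2 \<Rightarrow> (real^2) set \<Rightarrow> (real^2) set" where
  "mat_img A L = (\<lambda>v. A *v v) ` L"

definition h_mat :: "real \<Rightarrow> real^2^2" where "h_mat s = mat2 1 0 (-s) 1"

definition g_mat :: "real \<Rightarrow> real \<Rightarrow> real^2^2" where "g_mat a b = mat2 a b 0 (inverse a)"

definition S1 :: "(real^2) set" where "S1 = {v. 0 < v$1 \<and> v$1 \<le> 1}"

definition farey_tri :: "nat \<Rightarrow> (real \<times> real) set" where
  "farey_tri q = {(a, b). 0 < a \<and> a \<le> 1 \<and> 1 - lambda_q q * a < b \<and> b \<le> 1}"

definition pos_slopes :: "nat \<Rightarrow> real \<Rightarrow> real \<Rightarrow> real set" where
  "pos_slopes q a b = {v$2 / v$1 | v. v \<in> mat_img (g_mat a b) (Lambda_q q) \<inter> S1 \<and> v$2 / v$1 > 0}"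

text \<open>R_q(a,b): the smallest positive slope (its existence is a fact from the paper).\<close>
definition R_q :: "nat \<Rightarrow> real \<Rightarrow> real \<Rightarrow> real" where
  "R_q q a b = (THE s. s \<in> pos_slopes q a b \<and> (\<forall>t \<in> pos_slopes q a b. s \<le> t))"

definition BCZ_q :: "nat \<Rightarrow> real \<times> real \<Rightarrow> real \<times> real" where
  "BCZ_q q p = (case p of (a, b) \<Rightarrow>
     (THE cd. cd \<in> farey_tri q \<and>
        mat_img (h_mat (R_q q a b) ** g_mat a b) (Lambda_q q)
          = mat_img (g_mat (fst cd) (snd cd)) (Lambda_q q)))"

end

theory Submission
  imports Defs
begin

text \<open>
  Everything is read off the lattice \<open>g\<^sub>a\<^sub>,\<^sub>b \<Lambda>\<^sub>q\<close>.  Since \<open>\<Lambda>\<^sub>q\<close> is discrete (every second coordinate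
  is \<open>0\<close> or of modulus \<open>\<ge> 1\<close>), the positive slopes of \<open>g\<^sub>a\<^sub>,\<^sub>b \<Lambda>\<^sub>q \<inter> S\<^sub>1\<close> form an increasing sequence
  \<open>\<sigma>\<^sub>1 < \<sigma>\<^sub>2 < \<dots>\<close>, and the \<open>n\<close>-th iterate of \<open>BCZ\<^sub>q\<close> represents \<open>h\<^sub>\<sigma>\<^sub>n g\<^sub>a\<^sub>,\<^sub>b \<Lambda>\<^sub>q\<close>.  Hence \<open>(a, b)\<close> is
  periodic iff some \<open>h\<^sub>s\<close>, \<open>s > 0\<close>, stabilises \<open>g\<^sub>a\<^sub>,\<^sub>b \<Lambda>\<^sub>q\<close>, i.e. iff the transvection
  \<open>x \<mapsto> x + s det(w, x) w\<close> along \<open>w = (-b, a)\<close> preserves \<open>\<Lambda>\<^sub>q\<close>.  If \<open>w\<close> is parallel to a vector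
  \<open>M (1,0)\<close> of \<open>\<Lambda>\<^sub>q\<close>, a suitable such transvection is the parabolic element \<open>M T\<^sub>q M\<^sup>-\<^sup>1 \<in> G\<^sub>q\<close>.
  Conversely, conjugating the transvection by \<open>G\<^sub>q\<close> and using discreteness shows that every vector of the
  orbit \<open>G\<^sub>q w\<close> has second coordinate \<open>0\<close> or bounded away from \<open>0\<close>, while a Euclidean-type descent with
  \<open>T\<^sub>q\<close> and \<open>S\<close> makes it arbitrarily small; so \<open>w\<close> is parallel to a vector of \<open>\<Lambda>\<^sub>q\<close>.
\<close>

section \<open>Two-by-two matrices\<close>

lemma vec2_nth [simp]: "vec2 x y $ 1 = x" "vec2 x y $ 2 = y"
  by (simp_all add: vec2_def)

lemma vec2_eta: "vec2 (v$1) (v$2) = v"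
  by (simp add: vec_eq_iff forall_2)

lemma vec2_cases: obtains x y where "v = vec2 x y"
  using vec2_eta by metis

lemma vec2_eq_iff: "vec2 x y = vec2 x' y' \<longleftrightarrow> x = x' \<and> y = y'"
  by (auto simp: vec_eq_iff forall_2)

lemma uminus_vec2: "- vec2 x y = vec2 (-x) (-y)"
  by (simp add: vec_eq_iff forall_2)

lemma scaleR_vec2: "t *\<^sub>R vec2 x y = vec2 (t * x) (t * y)"
  by (simp add: vec_eq_iff forall_2)

lemma mat2_nth [simp]:
  "mat2 a b c d $ 1 $ 1 = a" "mat2 a b c d $ 1 $ 2 = b"
  "mat2 a b c d $ 2 $ 1 = c" "mat2 a b c d $ 2 $ 2 = d"
  by (simp_all add: mat2_def)

lemma mat2_eta: "mat2 (M$1$1) (M$1$2) (M$2$1) (M$2$2) = M"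
  by (simp add: vec_eq_iff forall_2)

lemma mat2_cases: obtains a b c d where "M = mat2 a b c d"
  using mat2_eta by metis

lemma mat2_mult:
  "mat2 a b c d ** mat2 e f g h = mat2 (a*e + b*g) (a*f + b*h) (c*e + d*g) (c*f + d*h)"
  by (simp add: vec_eq_iff forall_2 matrix_matrix_mult_def sum_2)

lemma mat2_mult_vec2: "mat2 a b c d *v vec2 x y = vec2 (a*x + b*y) (c*x + d*y)"
  by (simp add: vec_eq_iff forall_2 matrix_vector_mult_def sum_2)

lemma mat_1_eq_mat2: "(mat 1 :: real^2^2) = mat2 1 0 0 1"
  by (simp add: vec_eq_iff forall_2 mat_def)

lemma det_mat2: "det (mat2 a b c d) = a * d - b * c"
  by (simp add: det_2)

lemma matrix_vector_mult_uminus: "(M :: real^2^2) *v (- v) = - (M *v v)"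
  by (cases M rule: mat2_cases, cases v rule: vec2_cases) (simp add: mat2_mult_vec2 uminus_vec2)

lemma matrix_inv_eqI:
  fixes A X :: "real^2^2"
  assumes "A ** X = mat 1" "X ** A = mat 1"
  shows "matrix_inv A = X"
proof -
  have inv: "matrix_inv A ** A = mat 1"
    unfolding matrix_inv_def by (rule someI2[where a = X]) (use assms in simp_all)
  have "matrix_inv A = (matrix_inv A ** A) ** X"
    using assms(1) by (simp add: matrix_mul_assoc[symmetric])
  then show ?thesis
    using inv by simp
qed

definition adj2 :: "real^2^2 \<Rightarrow> real^2^2" where
  "adj2 M = mat2 (M$2$2) (-(M$1$2)) (-(M$2$1)) (M$1$1)"

lemma adj2_mat2 [simp]: "adj2 (mat2 a b c d) = mat2 d (-b) (-c) a"
  by (simp add: adj2_def)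

lemma adj2_mult: "adj2 (A ** B) = adj2 B ** adj2 A"
  by (cases A rule: mat2_cases, cases B rule: mat2_cases) (simp add: mat2_mult algebra_simps)

lemma adj2_mult_right: "det M = 1 \<Longrightarrow> M ** adj2 M = mat 1"
  by (cases M rule: mat2_cases) (simp add: det_mat2 mat2_mult mat_1_eq_mat2 algebra_simps)

lemma adj2_mult_left: "det M = 1 \<Longrightarrow> adj2 M ** M = mat 1"
  by (cases M rule: mat2_cases) (simp add: det_mat2 mat2_mult mat_1_eq_mat2 algebra_simps)

lemma adj2_mult_cancel:
  "det M = 1 \<Longrightarrow> M *v (adj2 M *v v) = v" "det M = 1 \<Longrightarrow> adj2 M *v (M *v v) = v"
  by (simp_all add: matrix_vector_mul_assoc adj2_mult_right adj2_mult_left)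

definition det2 :: "real^2 \<Rightarrow> real^2 \<Rightarrow> real" where
  "det2 v w = v$1 * w$2 - v$2 * w$1"

lemma det2_matrix_vector_mult: "det2 (M *v v) (M *v w) = det M * det2 v w"
  by (cases M rule: mat2_cases, cases v rule: vec2_cases, cases w rule: vec2_cases)
    (simp add: det_mat2 mat2_mult_vec2 det2_def algebra_simps)

lemma adj2_mult_vec_snd: "(adj2 M *v w) $ 2 = det2 (M *v vec2 1 0) w"
  by (cases M rule: mat2_cases, cases w rule: vec2_cases) (simp add: mat2_mult_vec2 det2_def algebra_simps)

section \<open>The Hecke group and its orbit of \<open>(1,0)\<close>\<close>

definition S_inv :: "real^2^2" where "S_inv = mat2 0 1 (-1) 0"

definition T_inv :: "nat \<Rightarrow> real^2^2" where "T_inv q = mat2 1 (- lambda_q q) 0 1"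

lemma matrix_inv_S_mat: "matrix_inv S_mat = S_inv"
  by (rule matrix_inv_eqI) (simp_all add: S_mat_def S_inv_def mat2_mult mat_1_eq_mat2)

lemma matrix_inv_T_mat: "matrix_inv (T_mat q) = T_inv q"
  by (rule matrix_inv_eqI) (simp_all add: T_mat_def T_inv_def mat2_mult mat_1_eq_mat2)

lemma S_mat_mult_vec2: "S_mat *v vec2 x y = vec2 (-y) x"
  by (simp add: S_mat_def mat2_mult_vec2)

lemma T_mat_mult_vec2: "T_mat q *v vec2 x y = vec2 (x + lambda_q q * y) y"
  by (simp add: T_mat_def mat2_mult_vec2)

lemma T_inv_mult_vec2: "T_inv q *v vec2 x y = vec2 (x - lambda_q q * y) y"
  by (simp add: T_inv_def mat2_mult_vec2)

lemma G_q_mult: "M \<in> G_q q \<Longrightarrow> N \<in> G_q q \<Longrightarrow> M ** N \<in> G_q q"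
  by (induction M rule: G_q.induct) (simp_all add: matrix_mul_assoc[symmetric] G_q.intros)

lemma S_mat_in_G_q: "S_mat \<in> G_q q"
  and S_inv_in_G_q: "S_inv \<in> G_q q"
  and T_mat_in_G_q: "T_mat q \<in> G_q q"
  and T_inv_in_G_q: "T_inv q \<in> G_q q"
  using G_q.intros(2-5)[OF G_q.G_id, of q]
  by (simp_all add: matrix_mul_rid matrix_inv_S_mat matrix_inv_T_mat)

lemma det_G_q: "M \<in> G_q q \<Longrightarrow> det M = 1"
  by (induction M rule: G_q.induct)
    (simp_all add: det_mul matrix_inv_S_mat matrix_inv_T_mat,
     simp_all add: mat_1_eq_mat2 det_mat2 S_mat_def S_inv_def T_mat_def T_inv_def)

lemma adj2_in_G_q: "M \<in> G_q q \<Longrightarrow> adj2 M \<in> G_q q"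
proof (induction M rule: G_q.induct)
  case G_id
  then show ?case
    using G_q.G_id[of q] by (simp add: mat_1_eq_mat2)
next
  case (G_S M)
  have "adj2 S_mat = S_inv" by (simp add: S_mat_def S_inv_def)
  then show ?case using G_S by (simp add: adj2_mult G_q_mult S_inv_in_G_q)
next
  case (G_Sinv M)
  have "adj2 S_inv = S_mat" by (simp add: S_mat_def S_inv_def)
  then show ?case using G_Sinv by (simp add: adj2_mult G_q_mult S_mat_in_G_q matrix_inv_S_mat)
next
  case (G_T M)
  have "adj2 (T_mat q) = T_inv q" by (simp add: T_mat_def T_inv_def)
  then show ?case using G_T by (simp add: adj2_mult G_q_mult T_inv_in_G_q)
next
  case (G_Tinv M)
  have "adj2 (T_inv q) = T_mat q" by (simp add: T_mat_def T_inv_def)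
  then show ?case using G_Tinv by (simp add: adj2_mult G_q_mult T_mat_in_G_q matrix_inv_T_mat)
qed

lemma reflection_conj_in_G_q:
  "M \<in> G_q q \<Longrightarrow> mat2 (-1) 0 0 1 ** M ** mat2 (-1) 0 0 1 \<in> G_q q"
proof (induction M rule: G_q.induct)
  case G_id
  then show ?case
    using G_q.G_id[of q] by (simp add: mat_1_eq_mat2 mat2_mult)
next
  case (G_S M)
  have "mat2 (-1) 0 0 1 ** (S_mat ** M) ** mat2 (-1) 0 0 1
      = S_inv ** (mat2 (-1) 0 0 1 ** M ** mat2 (-1) 0 0 1)"
    by (cases M rule: mat2_cases) (simp add: S_mat_def S_inv_def mat2_mult)
  then show ?case using G_S by (simp add: G_q_mult S_inv_in_G_q)
next
  case (G_Sinv M)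
  have "mat2 (-1) 0 0 1 ** (S_inv ** M) ** mat2 (-1) 0 0 1
      = S_mat ** (mat2 (-1) 0 0 1 ** M ** mat2 (-1) 0 0 1)"
    by (cases M rule: mat2_cases) (simp add: S_mat_def S_inv_def mat2_mult)
  then show ?case using G_Sinv by (simp add: G_q_mult S_mat_in_G_q matrix_inv_S_mat)
next
  case (G_T M)
  have "mat2 (-1) 0 0 1 ** (T_mat q ** M) ** mat2 (-1) 0 0 1
      = T_inv q ** (mat2 (-1) 0 0 1 ** M ** mat2 (-1) 0 0 1)"
    by (cases M rule: mat2_cases) (simp add: T_mat_def T_inv_def mat2_mult algebra_simps)
  then show ?case using G_T by (simp add: G_q_mult T_inv_in_G_q)
next
  case (G_Tinv M)
  have "mat2 (-1) 0 0 1 ** (T_inv q ** M) ** mat2 (-1) 0 0 1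
      = T_mat q ** (mat2 (-1) 0 0 1 ** M ** mat2 (-1) 0 0 1)"
    by (cases M rule: mat2_cases) (simp add: T_mat_def T_inv_def mat2_mult algebra_simps)
  then show ?case using G_Tinv by (simp add: G_q_mult T_mat_in_G_q matrix_inv_T_mat)
qed

lemma Lambda_q_iff: "v \<in> Lambda_q q \<longleftrightarrow> (\<exists>M\<in>G_q q. v = M *v vec2 1 0)"
  by (auto simp: Lambda_q_def)

lemma matrix_vector_mult_vec2_1_0: "M *v vec2 1 0 = vec2 (M$1$1) (M$2$1)"
  by (cases M rule: mat2_cases) (simp add: mat2_mult_vec2)

lemma G_q_mult_Lambda_q: "M \<in> G_q q \<Longrightarrow> v \<in> Lambda_q q \<Longrightarrow> M *v v \<in> Lambda_q q"
  by (auto simp: Lambda_q_iff matrix_vector_mul_assoc G_q_mult)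

lemma mat_img_G_q: "M \<in> G_q q \<Longrightarrow> mat_img M (Lambda_q q) = Lambda_q q"
  unfolding mat_img_def
  by (auto simp: G_q_mult_Lambda_q adj2_in_G_q adj2_mult_cancel det_G_q
      intro!: image_eqI[where x = "adj2 M *v _"])

lemma vec2_1_0_in_Lambda_q: "vec2 1 0 \<in> Lambda_q q"
  using G_q.G_id by (force simp: Lambda_q_iff)

lemma vec2_0_1_in_Lambda_q: "vec2 0 1 \<in> Lambda_q q"
  using G_q_mult_Lambda_q[OF S_mat_in_G_q vec2_1_0_in_Lambda_q] by (simp add: S_mat_mult_vec2)

lemma S_mat_squared: "S_mat *v (S_mat *v v) = - v"
  by (cases v rule: vec2_cases) (simp add: S_mat_mult_vec2 uminus_vec2)

lemma Lambda_q_uminus: "v \<in> Lambda_q q \<Longrightarrow> - v \<in> Lambda_q q"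
  using G_q_mult_Lambda_q[OF S_mat_in_G_q G_q_mult_Lambda_q[OF S_mat_in_G_q]]
  by (simp add: S_mat_squared)

lemma Lambda_q_reflect: "vec2 x y \<in> Lambda_q q \<Longrightarrow> vec2 (-x) y \<in> Lambda_q q"
proof -
  assume "vec2 x y \<in> Lambda_q q"
  then obtain M where M: "M \<in> G_q q" "vec2 x y = M *v vec2 1 0"
    by (auto simp: Lambda_q_iff)
  have "(mat2 (-1) 0 0 1 ** M ** mat2 (-1) 0 0 1) *v vec2 1 0 \<in> Lambda_q q"
    using reflection_conj_in_G_q[OF M(1)] by (auto simp: Lambda_q_iff)
  also have "(mat2 (-1) 0 0 1 ** M ** mat2 (-1) 0 0 1) *v vec2 1 0 = - vec2 (-x) y"
    using M(2) by (cases M rule: mat2_cases) (simp add: mat2_mult mat2_mult_vec2 vec2_eq_iff uminus_vec2)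
  finally show ?thesis
    using Lambda_q_uminus by fastforce
qed

lemma vec2_shift_mem:
  assumes T: "\<And>z. z \<in> X \<Longrightarrow> T_mat q *v z \<in> X" and T_inv: "\<And>z. z \<in> X \<Longrightarrow> T_inv q *v z \<in> X"
    and "vec2 x y \<in> X"
  shows "vec2 (x + of_int m * lambda_q q * y) y \<in> X"
proof -
  have shifts: "vec2 (x + of_nat n * lambda_q q * y) y \<in> X \<and> vec2 (x - of_nat n * lambda_q q * y) y \<in> X" for n
  proof (induction n)
    case (Suc n)
    then show ?case
      using T T_inv by (fastforce simp: T_mat_mult_vec2 T_inv_mult_vec2 algebra_simps)
  qed (simp add: assms(3))
  show ?thesis
  proof (cases "0 \<le> m")
    case True
    then show ?thesis using shifts[of "nat m"] by simp
  next
    case False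
    then show ?thesis using shifts[of "nat (- m)"] by simp
  qed
qed

lemma Lambda_q_shift: "vec2 x y \<in> Lambda_q q \<Longrightarrow> vec2 (x + of_int m * lambda_q q * y) y \<in> Lambda_q q"
  by (rule vec2_shift_mem) (auto intro: G_q_mult_Lambda_q T_mat_in_G_q T_inv_in_G_q)

section \<open>Discreteness of the orbit \<open>\<Lambda>\<^sub>q\<close>\<close>

definition sin_ratio :: "nat \<Rightarrow> int \<Rightarrow> real" where
  "sin_ratio q k = sin (of_int k * (pi / real q)) / sin (pi / real q)"

definition U_mat :: "nat \<Rightarrow> real^2^2" where "U_mat q = mat2 (lambda_q q) (-1) 1 0"

definition U_iter :: "nat \<Rightarrow> nat \<Rightarrow> real^2 \<Rightarrow> real^2" where
  "U_iter q n = ((*v) (U_mat q)) ^^ n"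

lemma U_iter_0 [simp]: "U_iter q 0 w = w"
  by (simp add: U_iter_def)

lemma U_iter_Suc: "U_iter q (Suc n) w = U_mat q *v U_iter q n w"
  by (simp add: U_iter_def)

lemma U_mat_in_G_q: "U_mat q \<in> G_q q"
proof -
  have "U_mat q = T_mat q ** S_mat"
    by (simp add: U_mat_def T_mat_def S_mat_def mat2_mult)
  then show ?thesis
    by (simp add: G_q_mult T_mat_in_G_q S_mat_in_G_q)
qed

lemma U_iter_in_Lambda_q: "v \<in> Lambda_q q \<Longrightarrow> U_iter q n v \<in> Lambda_q q"
  by (induction n) (auto simp: U_iter_Suc intro: G_q_mult_Lambda_q[OF U_mat_in_G_q])

lemma sin_diff_mult_sin_add: "sin (x - t) * sin (x + t) = sin x ^ 2 - sin (t::real) ^ 2"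
proof -
  have "sin (x - t) * sin (x + t) = (sin x * cos t)^2 - (cos x * sin t)^2"
    by (simp only: sin_add sin_diff power2_eq_square algebra_simps)
  also have "\<dots> = sin x ^ 2 - sin t ^ 2"
    by (simp add: power_mult_distrib cos_squared_eq algebra_simps)
  finally show ?thesis .
qed

locale hecke =
  fixes q :: nat
  assumes q_ge_3: "3 \<le> q"
begin

lemma sin_pi_div_q_pos: "0 < sin (pi / real q)"
  using q_ge_3 by (intro sin_gt_zero) (auto simp: field_simps)

lemma lambda_q_less_2: "lambda_q q < 2"
proof -
  have "cos (pi / real q) < cos 0"
    using q_ge_3 by (intro cos_monotone_0_pi) (auto simp: field_simps)
  then show ?thesis
    by (simp add: lambda_q_def)
qed

lemma lambda_q_pos: "0 < lambda_q q"
proof -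
  have "cos (pi / 3) \<le> cos (pi / real q)"
    using q_ge_3 by (intro cos_monotone_0_pi_le) (auto simp: field_simps)
  then show ?thesis
    by (simp add: lambda_q_def cos_60)
qed

lemma sin_ratio_rec: "sin_ratio q (k + 1) = lambda_q q * sin_ratio q k - sin_ratio q (k - 1)"
proof -
  let ?t = "pi / real q" and ?x = "of_int k * (pi / real q)"
  have "of_int (k + 1) * ?t = ?x + ?t" "of_int (k - 1) * ?t = ?x - ?t"
    using q_ge_3 by (simp_all add: field_simps)
  then have "sin (of_int (k + 1) * ?t) + sin (of_int (k - 1) * ?t) = 2 * cos ?t * sin ?x"
    by (simp add: sin_add sin_diff)
  then show ?thesis
    using sin_pi_div_q_pos by (simp add: sin_ratio_def lambda_q_def field_simps)
qed

lemma sin_ratio_Cassini: "sin_ratio q (k + 1)^2 - sin_ratio q k * sin_ratio q (k + 2) = 1"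
proof -
  let ?t = "pi / real q" and ?x = "of_int (k + 1) * (pi / real q)"
  have "of_int k * ?t = ?x - ?t" "of_int (k + 2) * ?t = ?x + ?t"
    using q_ge_3 by (simp_all add: field_simps)
  then have "sin (of_int k * ?t) * sin (of_int (k + 2) * ?t) = sin ?x ^ 2 - sin ?t ^ 2"
    by (simp only: sin_diff_mult_sin_add)
  then show ?thesis
    using sin_pi_div_q_pos by (simp add: sin_ratio_def field_simps power2_eq_square)
qed

lemma sin_ratio_0 [simp]: "sin_ratio q 0 = 0"
  and sin_ratio_1 [simp]: "sin_ratio q 1 = 1"
  and sin_ratio_minus_1 [simp]: "sin_ratio q (-1) = -1"
  using sin_pi_div_q_pos by (simp_all add: sin_ratio_def)

lemma sin_ratio_2: "sin_ratio q 2 = lambda_q q"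
  using sin_ratio_rec[of 1] by simp

lemma sin_ratio_q: "sin_ratio q (int q) = 0"
  and sin_ratio_q_plus_1: "sin_ratio q (int q + 1) = -1"
  and sin_ratio_q_minus_1: "sin_ratio q (int q - 1) = 1"
  and sin_ratio_q_minus_2: "sin_ratio q (int q - 2) = lambda_q q"
proof -
  have "of_int (int q + 1) * (pi / real q) = pi / real q + pi"
    "of_int (int q - 1) * (pi / real q) = pi - pi / real q"
    "of_int (int q - 2) * (pi / real q) = pi - 2 * (pi / real q)"
    using q_ge_3 by (simp_all add: field_simps)
  moreover have "sin (2 * (pi / real q)) = 2 * sin (pi / real q) * cos (pi / real q)"
    by (rule sin_double)
  ultimately show "sin_ratio q (int q) = 0" "sin_ratio q (int q + 1) = -1" "sin_ratio q (int q - 1) = 1"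
    "sin_ratio q (int q - 2) = lambda_q q"
    using q_ge_3 sin_pi_div_q_pos by (simp_all add: sin_ratio_def lambda_q_def)
qed

lemma sin_ratio_nonneg: "0 \<le> k \<Longrightarrow> k \<le> int q \<Longrightarrow> 0 \<le> sin_ratio q k"
proof -
  assume k: "0 \<le> k" "k \<le> int q"
  have "of_int k * (pi / real q) \<le> real q * (pi / real q)"
    using k by (intro mult_right_mono) auto
  then have "0 \<le> sin (of_int k * (pi / real q))"
    using k q_ge_3 by (intro sin_ge_zero) auto
  then show ?thesis
    using sin_pi_div_q_pos by (simp add: sin_ratio_def)
qed

lemma sin_ratio_ge_1: "1 \<le> k \<Longrightarrow> k \<le> int q - 1 \<Longrightarrow> 1 \<le> sin_ratio q k"
proof -
  assume k: "1 \<le> k" "k \<le> int q - 1"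
  let ?t = "pi / real q" and ?x = "of_int k * (pi / real q)"
  have t_pos: "0 < ?t"
    using q_ge_3 by simp
  have "?t \<le> ?x"
    using k t_pos mult_right_mono[of 1 "of_int k" ?t] by simp
  moreover have "?x \<le> (real q - 1) * ?t"
    using k t_pos by (intro mult_right_mono) (auto simp flip: of_int_le_iff)
  then have "?x \<le> pi - ?t"
    using q_ge_3 by (simp add: field_simps)
  \<comment> \<open>\<open>sin\<close> is at least \<open>sin ?t\<close> on \<open>[?t, \<pi> - ?t]\<close> by symmetry about \<open>\<pi>/2\<close>\<close>
  ultimately have "sin ?t \<le> sin ?x"
    using sin_monotone_2pi_le[of ?t ?x] sin_monotone_2pi_le[of ?t "pi - ?x"] t_pos
    by (cases "?x \<le> pi / 2") auto
  then show ?thesis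
    using sin_pi_div_q_pos by (simp add: sin_ratio_def)
qed

lemma U_iter_vec2:
  "U_iter q n (vec2 x y) = vec2 (sin_ratio q (int n + 1) * x - sin_ratio q (int n) * y)
     (sin_ratio q (int n) * x - sin_ratio q (int n - 1) * y)"
proof (induction n)
  case (Suc n)
  have "sin_ratio q (int (Suc n)) = lambda_q q * sin_ratio q (int n) - sin_ratio q (int n - 1)"
    using sin_ratio_rec[of "int n"] by (simp add: add.commute)
  moreover have "sin_ratio q (int (Suc n) + 1) = lambda_q q * sin_ratio q (int (Suc n)) - sin_ratio q (int n)"
    using sin_ratio_rec[of "int (Suc n)"] by simp
  ultimately show ?case
    unfolding U_iter_Suc Suc U_mat_def mat2_mult_vec2 vec2_eq_iff
    by (simp add: algebra_simps) algebra
qed simp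

lemma U_iter_vec2_1_0: "U_iter q n (vec2 1 0) = vec2 (sin_ratio q (int n + 1)) (sin_ratio q (int n))"
  by (simp add: U_iter_vec2)

lemma U_iter_q: "U_iter q q w = - w"
  by (cases w rule: vec2_cases)
    (simp add: U_iter_vec2 sin_ratio_q sin_ratio_q_plus_1 sin_ratio_q_minus_1 uminus_vec2)

lemma U_iter_q_minus_1: "U_iter q (q - 1) (vec2 x y) = vec2 (-y) (x - lambda_q q * y)"
proof -
  have "int (q - 1) + 1 = int q" "int (q - 1) = int q - 1" "int (q - 1) - 1 = int q - 2"
    using q_ge_3 by auto
  then show ?thesis
    by (simp add: U_iter_vec2 sin_ratio_q sin_ratio_q_minus_1 sin_ratio_q_minus_2)
qed

end

text \<open>
  The gap \<open>v$2 = 0 \<or> 1 \<le> \<bar>v$2\<bar>\<close> for \<open>v \<in> \<Lambda>\<^sub>q\<close> is proved by exhibiting an explicit superset of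
  \<open>\<Lambda>\<^sub>q\<close>: the vectors \<open>\<plusminus>U\<^sup>j w\<close>, \<open>j < q\<close>, where \<open>U = T S\<close> (so that \<open>U\<^sup>q = -1\<close>) and \<open>w\<close> ranges over
  the tree grown from \<open>(0,1)\<close> by the moves \<open>w \<mapsto> -S U\<^sup>j w\<close>, \<open>1 \<le> j < q\<close>. This set is closed under
  \<open>S\<close> and \<open>U\<close>, hence under \<open>G\<^sub>q\<close>, and the tree vectors all satisfy \<open>x \<le> 0\<close>, \<open>x = 0 \<or> x \<le> -1\<close>,
  \<open>y \<ge> 1\<close> because the coefficients \<open>sin (k\<pi>/q) / sin (\<pi>/q)\<close> are \<open>\<ge> 1\<close> for \<open>0 < k < q\<close>.
\<close>

inductive_set cusp_tree :: "nat \<Rightarrow> (real^2) set" for q :: nat where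
  root: "vec2 0 1 \<in> cusp_tree q"
| step: "w \<in> cusp_tree q \<Longrightarrow> 1 \<le> j \<Longrightarrow> j < q \<Longrightarrow> - (S_mat *v U_iter q j w) \<in> cusp_tree q"

definition cusp_orbit :: "nat \<Rightarrow> (real^2) set" where
  "cusp_orbit q = {v. \<exists>w\<in>cusp_tree q. \<exists>j<q. v = U_iter q j w \<or> v = - U_iter q j w}"

context hecke
begin

lemma sin_ratio_combination_le:
  assumes x: "x \<le> 0" "x = 0 \<or> x \<le> -1" and y: "1 \<le> y" and j: "1 \<le> j" "j < q"
  shows "sin_ratio q (int j) * x - sin_ratio q (int j - 1) * y = 0
    \<or> sin_ratio q (int j) * x - sin_ratio q (int j - 1) * y \<le> -1"
proof -
  have "sin_ratio q (int j) * x \<le> 0"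
    using x j by (intro mult_nonneg_nonpos sin_ratio_nonneg) auto
  moreover have "1 \<le> sin_ratio q (int j - 1) * y" if "j \<noteq> 1"
    using y j that by (intro mult_ge1_I sin_ratio_ge_1) auto
  ultimately show ?thesis
    using x by (cases "j = 1") auto
qed

lemma cusp_tree_bounds: "w \<in> cusp_tree q \<Longrightarrow> w$1 \<le> 0 \<and> (w$1 = 0 \<or> w$1 \<le> -1) \<and> 1 \<le> w$2"
proof (induction w rule: cusp_tree.induct)
  case (step w j)
  obtain x y where w: "w = vec2 x y"
    by (rule vec2_cases)
  have x: "x \<le> 0" "x = 0 \<or> x \<le> -1" and y: "1 \<le> y"
    using step.IH w by auto
  have "- (S_mat *v U_iter q j w) = vec2 (sin_ratio q (int j) * x - sin_ratio q (int j - 1) * y)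
      (sin_ratio q (int j) * y - sin_ratio q (int j + 1) * x)"
    by (simp add: w U_iter_vec2 S_mat_mult_vec2 uminus_vec2 algebra_simps)
  moreover have "1 \<le> sin_ratio q (int j) * y"
    using y step.hyps by (intro mult_ge1_I sin_ratio_ge_1) auto
  moreover have "0 \<le> sin_ratio q (int j + 1) * - x"
    using x step.hyps by (intro mult_nonneg_nonneg sin_ratio_nonneg) auto
  moreover have "sin_ratio q (int j) * x - sin_ratio q (int j - 1) * y = 0
      \<or> sin_ratio q (int j) * x - sin_ratio q (int j - 1) * y \<le> -1"
    using sin_ratio_combination_le[OF x y step.hyps(2,3)] .
  ultimately show ?case
    by auto
qed simp

lemma cusp_orbit_uminus: "v \<in> cusp_orbit q \<Longrightarrow> - v \<in> cusp_orbit q"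
  unfolding cusp_orbit_def by force

lemma cusp_orbit_U: "v \<in> cusp_orbit q \<Longrightarrow> U_mat q *v v \<in> cusp_orbit q"
proof -
  assume "v \<in> cusp_orbit q"
  then obtain w j where wj: "w \<in> cusp_tree q" "j < q" "v = U_iter q j w \<or> v = - U_iter q j w"
    unfolding cusp_orbit_def by blast
  have "U_iter q (Suc j) w \<in> cusp_orbit q \<and> - U_iter q (Suc j) w \<in> cusp_orbit q"
  proof (cases "Suc j < q")
    case True
    then show ?thesis
      using wj unfolding cusp_orbit_def by blast
  next
    case False
    then have "Suc j = q"
      using wj by simp
    then have "U_iter q (Suc j) w = - U_iter q 0 w"
      using U_iter_q by simp
    moreover have "0 < q"
      using q_ge_3 by simp
    then have "U_iter q 0 w \<in> cusp_orbit q" "- U_iter q 0 w \<in> cusp_orbit q"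
      using wj(1) unfolding cusp_orbit_def by blast+
    ultimately show ?thesis
      by simp
  qed
  then show ?thesis
    using wj by (auto simp: U_iter_Suc matrix_vector_mult_uminus)
qed

lemma cusp_orbit_U_iter: "v \<in> cusp_orbit q \<Longrightarrow> U_iter q n v \<in> cusp_orbit q"
  by (induction n) (auto simp: U_iter_Suc cusp_orbit_U)

lemma cusp_orbit_S: "v \<in> cusp_orbit q \<Longrightarrow> S_mat *v v \<in> cusp_orbit q"
proof -
  assume "v \<in> cusp_orbit q"
  then obtain w j where wj: "w \<in> cusp_tree q" "j < q" "v = U_iter q j w \<or> v = - U_iter q j w"
    unfolding cusp_orbit_def by blast
  have neg: "- (S_mat *v U_iter q j w) \<in> cusp_orbit q"
  proof (cases "j = 0")
    case False
    then have "- (S_mat *v U_iter q j w) \<in> cusp_tree q"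
      using wj by (intro cusp_tree.step) auto
    then show ?thesis
      using q_ge_3 unfolding cusp_orbit_def by (intro CollectI bexI[of _ "- (S_mat *v U_iter q j w)"] exI[of _ 0]) auto
  next
    case True
    show ?thesis
      using wj(1)
    proof cases
      case root
      have "- (S_mat *v U_iter q j w) = - U_iter q 1 (vec2 0 1)"
        using True root by (simp add: S_mat_mult_vec2 U_mat_def mat2_mult_vec2 U_iter_Suc)
      then show ?thesis
        using q_ge_3 cusp_tree.root[of q] unfolding cusp_orbit_def by force
    next
      case (step w' j')
      have "S_mat *v U_iter q j w = U_iter q j' w'"
        using True step by (simp add: matrix_vector_mult_uminus S_mat_squared)
      then show ?thesis
        using step unfolding cusp_orbit_def by force
    qed
  qed
  show ?thesis
    using wj neg cusp_orbit_uminus[OF neg] by (auto simp: matrix_vector_mult_uminus)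
qed

lemma G_q_mult_cusp_orbit: "M \<in> G_q q \<Longrightarrow> v \<in> cusp_orbit q \<Longrightarrow> M *v v \<in> cusp_orbit q"
proof (induction M arbitrary: v rule: G_q.induct)
  case (G_Sinv M)
  have "S_inv *v x = - (S_mat *v x)" for x
    by (cases x rule: vec2_cases) (simp add: S_mat_mult_vec2 S_inv_def mat2_mult_vec2 uminus_vec2)
  then show ?case
    using G_Sinv by (simp add: matrix_vector_mul_assoc[symmetric] matrix_inv_S_mat cusp_orbit_S cusp_orbit_uminus)
next
  case (G_T M)
  have "T_mat q *v x = U_mat q *v (- (S_mat *v x))" for x
    by (cases x rule: vec2_cases)
      (simp add: S_mat_mult_vec2 T_mat_mult_vec2 U_mat_def mat2_mult_vec2 uminus_vec2 add.commute)
  then show ?case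
    using G_T by (simp add: matrix_vector_mul_assoc[symmetric] cusp_orbit_S cusp_orbit_uminus cusp_orbit_U)
next
  case (G_Tinv M)
  have "T_inv q *v x = - (S_mat *v U_iter q (q - 1) x)" for x
    by (cases x rule: vec2_cases) (simp only: U_iter_q_minus_1, simp add: S_mat_mult_vec2 T_inv_mult_vec2 uminus_vec2)
  then show ?case
    using G_Tinv
    by (simp add: matrix_vector_mul_assoc[symmetric] matrix_inv_T_mat cusp_orbit_S cusp_orbit_uminus
        cusp_orbit_U_iter)
qed (simp_all add: matrix_vector_mul_assoc[symmetric] cusp_orbit_S)

lemma Lambda_q_subset_cusp_orbit: "Lambda_q q \<subseteq> cusp_orbit q"
proof -
  have "vec2 1 0 = - U_iter q 1 (vec2 0 1)"
    by (simp add: U_mat_def mat2_mult_vec2 uminus_vec2 U_iter_Suc)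
  then have "vec2 1 0 \<in> cusp_orbit q"
    using q_ge_3 cusp_tree.root[of q] unfolding cusp_orbit_def by force
  then show ?thesis
    using G_q_mult_cusp_orbit by (auto simp: Lambda_q_iff)
qed

lemma cusp_orbit_snd_gap: "v \<in> cusp_orbit q \<Longrightarrow> v$2 = 0 \<or> 1 \<le> \<bar>v$2\<bar>"
proof -
  assume "v \<in> cusp_orbit q"
  then obtain w j where wj: "w \<in> cusp_tree q" "j < q" "v = U_iter q j w \<or> v = - U_iter q j w"
    unfolding cusp_orbit_def by blast
  obtain x y where w: "w = vec2 x y"
    by (rule vec2_cases)
  have x: "x \<le> 0" "x = 0 \<or> x \<le> -1" and y: "1 \<le> y"
    using cusp_tree_bounds[OF wj(1)] w by auto
  have "\<bar>v$2\<bar> = \<bar>sin_ratio q (int j) * x - sin_ratio q (int j - 1) * y\<bar>"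
    using wj(3) by (auto simp: w U_iter_vec2 uminus_vec2)
  then show ?thesis
    using sin_ratio_combination_le[OF x y, of j] wj(2) y by (cases "j = 0") auto
qed

lemma Lambda_q_snd_gap: "v \<in> Lambda_q q \<Longrightarrow> v$2 = 0 \<or> 1 \<le> \<bar>v$2\<bar>"
  using Lambda_q_subset_cusp_orbit cusp_orbit_snd_gap by blast


lemma Lambda_q_transport:
  assumes "v \<in> Lambda_q q" "w \<in> Lambda_q q"
  obtains M where "M \<in> G_q q" "v = M *v vec2 1 0" "adj2 M *v w \<in> Lambda_q q"
    "(adj2 M *v w) $ 2 = det2 v w"
  using assms adj2_in_G_q G_q_mult_Lambda_q adj2_mult_vec_snd by (metis Lambda_q_iff)

lemma Lambda_q_det2_gap: "v \<in> Lambda_q q \<Longrightarrow> w \<in> Lambda_q q \<Longrightarrow> det2 v w = 0 \<or> 1 \<le> \<bar>det2 v w\<bar>"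
  by (metis Lambda_q_transport Lambda_q_snd_gap)

lemma Lambda_q_horizontal: "vec2 k 0 \<in> Lambda_q q \<Longrightarrow> k = 1 \<or> k = -1"
proof -
  assume k: "vec2 k 0 \<in> Lambda_q q"
  then obtain M where M: "M \<in> G_q q" "vec2 k 0 = M *v vec2 1 0"
    by (auto simp: Lambda_q_iff)
  then have M_col: "M$1$1 = k" "M$2$1 = 0"
    by (simp_all add: matrix_vector_mult_vec2_1_0 vec2_eq_iff)
  then have det: "k * M$2$2 = 1"
    using det_G_q[OF M(1)] by (simp add: det_2)
  have "S_mat *v vec2 k 0 \<in> Lambda_q q"
    using G_q_mult_Lambda_q[OF S_mat_in_G_q k] .
  then have k_ge_1: "1 \<le> \<bar>k\<bar>"
    using Lambda_q_snd_gap det by (fastforce simp: S_mat_mult_vec2)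
  have "M *v vec2 0 1 \<in> Lambda_q q"
    using G_q_mult_Lambda_q[OF M(1) vec2_0_1_in_Lambda_q] .
  moreover have "(M *v vec2 0 1) $ 2 = M$2$2"
    by (cases M rule: mat2_cases) (simp add: mat2_mult_vec2)
  ultimately have d_ge_1: "1 \<le> \<bar>M$2$2\<bar>"
    using Lambda_q_snd_gap det by (metis mult_zero_right zero_neq_one)
  have "\<bar>k\<bar> * \<bar>M$2$2\<bar> = 1"
    using det by (metis abs_mult abs_one)
  moreover have "\<bar>k\<bar> * 1 \<le> \<bar>k\<bar> * \<bar>M$2$2\<bar>"
    using d_ge_1 by (intro mult_left_mono) auto
  ultimately have "\<bar>k\<bar> = 1"
    using k_ge_1 by linarith
  then show ?thesis
    by auto
qed

lemma Lambda_q_parallel: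
  assumes v: "v \<in> Lambda_q q" and w: "w \<in> Lambda_q q" and "det2 v w = 0"
  shows "w = v \<or> w = - v"
proof -
  obtain M where M: "M \<in> G_q q" "v = M *v vec2 1 0" "adj2 M *v w \<in> Lambda_q q"
    "(adj2 M *v w) $ 2 = 0"
    using Lambda_q_transport[OF v w] assms(3) by metis
  then obtain k where k: "adj2 M *v w = vec2 k 0"
    by (metis vec2_eta)
  then have "k = 1 \<or> k = -1"
    using M(3) Lambda_q_horizontal by simp
  moreover have "w = M *v vec2 k 0"
    using adj2_mult_cancel(1)[OF det_G_q[OF M(1)], of w] k by simp
  moreover have "vec2 (-1) 0 = - vec2 1 0"
    by (simp add: uminus_vec2)
  ultimately show ?thesis
    using M(2) by (auto simp: matrix_vector_mult_uminus)
qed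

lemma Lambda_q_norm_ge_1: "v \<in> Lambda_q q \<Longrightarrow> 1 \<le> norm v"
proof -
  assume v: "v \<in> Lambda_q q"
  show ?thesis
  proof (cases "v$2 = 0")
    case True
    then have "vec2 (v$1) 0 \<in> Lambda_q q"
      using v by (metis vec2_eta)
    then have "\<bar>v$1\<bar> = 1"
      using Lambda_q_horizontal by fastforce
    then show ?thesis
      using component_le_norm_cart[of v 1] by simp
  next
    case False
    then show ?thesis
      using Lambda_q_snd_gap[OF v] component_le_norm_cart[of v 2] by simp
  qed
qed

lemma Lambda_q_separated:
  assumes u: "u \<in> Lambda_q q" and w: "w \<in> Lambda_q q" and "u \<noteq> w" and R: "norm u \<le> R"
  shows "1 / (2 * R + 2) \<le> dist u w"
proof (rule ccontr)
  assume close: "\<not> 1 / (2 * R + 2) \<le> dist u w"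
  have R_nonneg: "0 \<le> R"
    using R norm_ge_zero[of u] by linarith
  have "\<bar>det2 u w\<bar> = \<bar>u$1 * (w - u)$2 - u$2 * (w - u)$1\<bar>"
    by (simp add: det2_def algebra_simps)
  also have "\<dots> \<le> \<bar>u$1\<bar> * \<bar>(w - u)$2\<bar> + \<bar>u$2\<bar> * \<bar>(w - u)$1\<bar>"
    using abs_triangle_ineq4[of "u$1 * (w - u)$2" "u$2 * (w - u)$1"] by (simp add: abs_mult)
  also have "\<dots> \<le> R * dist u w + R * dist u w"
    using R R_nonneg component_le_norm_cart[of u] component_le_norm_cart[of "w - u"]
    by (intro add_mono mult_mono) (auto simp: dist_norm norm_minus_commute intro: order_trans)
  also have "\<dots> \<le> dist u w * (2 * R + 2)"
    by (simp add: algebra_simps)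
  also have "\<dots> < 1"
    using close R_nonneg by (simp add: field_simps)
  finally have "det2 u w = 0"
    using Lambda_q_det2_gap[OF u w] by linarith
  then have "w = - u"
    using Lambda_q_parallel[OF u w] \<open>u \<noteq> w\<close> by auto
  then have "dist u w = 2 * norm u"
    by (simp add: dist_norm flip: scaleR_2)
  moreover have "1 / (2 * R + 2) \<le> 1"
    using R_nonneg by simp
  ultimately show False
    using close Lambda_q_norm_ge_1[OF u] by linarith
qed

lemma Lambda_q_finite_cball: "finite (Lambda_q q \<inter> cball 0 R)"
proof (rule ccontr)
  define \<delta> where "\<delta> = 1 / (2 * \<bar>R\<bar> + 2)"
  assume "infinite (Lambda_q q \<inter> cball 0 R)"
  then obtain z where "z islimpt Lambda_q q \<inter> cball 0 R"
    using bounded_infinite_imp_islimpt[OF subset_refl] by (meson bounded_Int bounded_cball)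
  then have inf: "infinite (Lambda_q q \<inter> cball 0 R \<inter> ball z (\<delta> / 2))"
    by (simp add: \<delta>_def islimpt_eq_infinite_ball add_pos_nonneg)
  then obtain u where u: "u \<in> Lambda_q q \<inter> cball 0 R \<inter> ball z (\<delta> / 2)"
    using infinite_imp_nonempty by blast
  obtain w where w: "w \<in> Lambda_q q \<inter> cball 0 R \<inter> ball z (\<delta> / 2) - {u}"
    using infinite_imp_nonempty[OF infinite_remove[OF inf, of u]] by blast
  have "dist u w < \<delta>"
    using u w dist_triangle_half_r[of z u \<delta> w] by (simp add: dist_commute)
  moreover have "\<delta> \<le> dist u w"
    unfolding \<delta>_def using u w by (intro Lambda_q_separated) auto
  ultimately show False
    by simp
qed

lemma Lambda_q_second_coord_1: "vec2 x 1 \<in> Lambda_q q \<Longrightarrow> \<exists>n::int. x = of_int n * lambda_q q"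
proof -
  assume x: "vec2 x 1 \<in> Lambda_q q"
  define n where "n = round (x / lambda_q q)"
  have "\<bar>x - of_int n * lambda_q q\<bar> = lambda_q q * \<bar>of_int n - x / lambda_q q\<bar>"
    using lambda_q_pos by (simp add: abs_mult abs_minus_commute field_simps)
  also have "\<dots> \<le> lambda_q q * (1 / 2)"
    using of_int_round_abs_le[of "x / lambda_q q"] lambda_q_pos by (intro mult_left_mono) (auto simp: n_def)
  finally have small: "\<bar>x - of_int n * lambda_q q\<bar> < 1"
    using lambda_q_less_2 by linarith
  have "vec2 (x + of_int (- n) * lambda_q q * 1) 1 \<in> Lambda_q q"
    by (rule Lambda_q_shift[OF x])
  then have "S_mat *v vec2 (x - of_int n * lambda_q q) 1 \<in> Lambda_q q"
    using G_q_mult_Lambda_q[OF S_mat_in_G_q] by simp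
  then have "x - of_int n * lambda_q q = 0"
    using Lambda_q_snd_gap small by (fastforce simp: S_mat_mult_vec2)
  then show ?thesis
    by auto
qed

end

section \<open>The Farey triangle and the BCZ map\<close>

lemma g_mat_mult_vec2: "g_mat a b *v vec2 x y = vec2 (a * x + b * y) (inverse a * y)"
  by (simp add: g_mat_def mat2_mult_vec2)

lemma h_mat_mult_vec2: "h_mat s *v vec2 x y = vec2 x (y - s * x)"
  by (simp add: h_mat_def mat2_mult_vec2)

lemma h_mat_mult: "h_mat s ** h_mat t = h_mat (s + t)"
  by (simp add: h_mat_def mat2_mult algebra_simps)

lemma h_mat_0: "h_mat 0 = mat 1"
  by (simp add: h_mat_def mat_1_eq_mat2)

lemma det_h_mat_g_mat: "0 < a \<Longrightarrow> det (h_mat s ** g_mat a b) = 1"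
  by (simp add: det_mul h_mat_def g_mat_def det_mat2)

lemma g_mat_inj: "0 < a \<Longrightarrow> g_mat a b *v v = g_mat a b *v w \<Longrightarrow> v = w"
  by (cases v rule: vec2_cases, cases w rule: vec2_cases) (auto simp: g_mat_mult_vec2 vec2_eq_iff)

lemma mat_img_iff: "w \<in> mat_img A X \<longleftrightarrow> (\<exists>v\<in>X. w = A *v v)"
  unfolding mat_img_def by auto

lemma mat_img_mult: "mat_img (A ** B) X = mat_img A (mat_img B X)"
  unfolding mat_img_def by (auto simp: matrix_vector_mul_assoc[symmetric] image_image)

lemma vec2_in_mat_img_g_mat:
  "vec2 a 0 \<in> mat_img (g_mat a b) (Lambda_q q)" "vec2 b (inverse a) \<in> mat_img (g_mat a b) (Lambda_q q)"
  using bexI[OF _ vec2_1_0_in_Lambda_q] bexI[OF _ vec2_0_1_in_Lambda_q]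
  by (simp_all add: mat_img_iff g_mat_mult_vec2)

context hecke
begin

lemma mat_img_g_mat_shift_subset:
  "mat_img (g_mat c (d + of_int n * c * lambda_q q)) (Lambda_q q) \<subseteq> mat_img (g_mat c d) (Lambda_q q)"
proof
  fix u
  assume "u \<in> mat_img (g_mat c (d + of_int n * c * lambda_q q)) (Lambda_q q)"
  then obtain v where "v \<in> Lambda_q q" "u = g_mat c (d + of_int n * c * lambda_q q) *v v"
    by (auto simp: mat_img_iff)
  moreover obtain x y where "v = vec2 x y"
    by (rule vec2_cases)
  ultimately have xy: "vec2 x y \<in> Lambda_q q" "u = g_mat c (d + of_int n * c * lambda_q q) *v vec2 x y"
    by simp_all
  then have "u = g_mat c d *v vec2 (x + of_int n * lambda_q q * y) y"
    by (simp add: g_mat_mult_vec2 algebra_simps)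
  then show "u \<in> mat_img (g_mat c d) (Lambda_q q)"
    using Lambda_q_shift[OF xy(1)] by (auto simp: mat_img_iff)
qed

lemma mat_img_g_mat_shift:
  "mat_img (g_mat c (d + of_int n * c * lambda_q q)) (Lambda_q q) = mat_img (g_mat c d) (Lambda_q q)"
  using mat_img_g_mat_shift_subset[of c d n] mat_img_g_mat_shift_subset[of c "d + of_int n * c * lambda_q q" "- n"]
  by (simp add: algebra_simps)

lemma farey_tri_representative:
  assumes det: "det A = 1" and c: "vec2 c 0 \<in> mat_img A (Lambda_q q)" "0 < c" "c \<le> 1"
  obtains d where "(c, d) \<in> farey_tri q" "mat_img A (Lambda_q q) = mat_img (g_mat c d) (Lambda_q q)"
proof -
  obtain M where M: "M \<in> G_q q" "vec2 c 0 = (A ** M) *v vec2 1 0"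
    using c(1) by (auto simp: mat_img_iff Lambda_q_iff matrix_vector_mul_assoc)
  have col: "(A ** M)$1$1 = c" "(A ** M)$2$1 = 0"
    using M(2) by (simp_all add: matrix_vector_mult_vec2_1_0 vec2_eq_iff)
  have "det (A ** M) = 1"
    using det det_G_q[OF M(1)] by (simp add: det_mul)
  then have "(A ** M)$2$2 = inverse c"
    using col c(2) by (simp add: det_2 field_simps)
  then have "A ** M = g_mat c ((A ** M)$1$2)"
    using col mat2_eta[of "A ** M"] unfolding g_mat_def by simp
  then have AL: "mat_img A (Lambda_q q) = mat_img (g_mat c ((A ** M)$1$2)) (Lambda_q q)"
    using mat_img_mult[of A M "Lambda_q q"] mat_img_G_q[OF M(1)] by simp
  define d0 where "d0 = (A ** M)$1$2"
  define n where "n = floor ((1 - d0) / (c * lambda_q q))"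
  have cl: "0 < c * lambda_q q"
    using c lambda_q_pos by simp
  have "of_int n \<le> (1 - d0) / (c * lambda_q q)" "(1 - d0) / (c * lambda_q q) < of_int n + 1"
    unfolding n_def by linarith+
  then have "of_int n * (c * lambda_q q) \<le> 1 - d0" "1 - d0 < (of_int n + 1) * (c * lambda_q q)"
    using cl by (simp_all add: le_divide_eq divide_less_eq)
  then have "(c, d0 + of_int n * c * lambda_q q) \<in> farey_tri q"
    using c by (simp add: farey_tri_def algebra_simps)
  then show ?thesis
    using AL mat_img_g_mat_shift[of c d0 n] that unfolding d0_def by metis
qed

lemma farey_tri_unique:
  assumes ab: "(a, b) \<in> farey_tri q" and ab': "(a', b') \<in> farey_tri q"
    and eq: "mat_img (g_mat a b) (Lambda_q q) = mat_img (g_mat a' b') (Lambda_q q)"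
  shows "a = a' \<and> b = b'"
proof -
  have a: "0 < a" "1 - lambda_q q * a < b" "b \<le> 1" and a': "0 < a'" "1 - lambda_q q * a' < b'" "b' \<le> 1"
    using ab ab' by (auto simp: farey_tri_def)
  obtain v where v: "v \<in> Lambda_q q" "vec2 a 0 = g_mat a' b' *v v"
    using eq vec2_in_mat_img_g_mat(1)[of a b q] by (auto simp: mat_img_iff)
  obtain x y where xy: "v = vec2 x y"
    by (rule vec2_cases)
  then have "y = 0" "a = a' * x"
    using a' v by (auto simp: g_mat_mult_vec2 vec2_eq_iff)
  then have "x = 1 \<or> x = -1"
    using Lambda_q_horizontal v(1) xy by simp
  then have aa: "a = a'"
    using \<open>a = a' * x\<close> a a' by (auto simp: zero_less_mult_iff)
  obtain v' where v': "v' \<in> Lambda_q q" "vec2 b (inverse a) = g_mat a' b' *v v'"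
    using eq vec2_in_mat_img_g_mat(2)[where a = a and b = b and q = q] by (auto simp: mat_img_iff)
  obtain x' y' where xy': "v' = vec2 x' y'"
    by (rule vec2_cases)
  then have "y' = 1" "b = a' * x' + b'"
    using a' aa v' by (auto simp: g_mat_mult_vec2 vec2_eq_iff)
  then obtain n where "b - b' = of_int n * (a * lambda_q q)"
    using Lambda_q_second_coord_1 v'(1) xy' aa by fastforce
  moreover have "\<bar>b - b'\<bar> < 1 * (a * lambda_q q)"
    using a a' aa by (simp add: abs_less_iff algebra_simps)
  ultimately have "\<bar>of_int n :: real\<bar> < 1"
    using a lambda_q_pos by (simp add: abs_mult mult_less_cancel_right)
  then have "n = 0"
    by linarith
  then show ?thesis
    using aa \<open>b - b' = of_int n * (a * lambda_q q)\<close> by simp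
qed

end

lemma pos_slopes_memI:
  assumes "w \<in> mat_img (g_mat a b) (Lambda_q q)" "0 < w$1" "w$1 \<le> 1" "0 < w$2 / w$1"
  shows "w$2 / w$1 \<in> pos_slopes q a b"
  using assms unfolding pos_slopes_def S1_def by blast

lemma pos_slopes_memE:
  assumes "\<sigma> \<in> pos_slopes q a b"
  obtains w where "w \<in> mat_img (g_mat a b) (Lambda_q q)" "0 < w$1" "w$1 \<le> 1" "\<sigma> = w$2 / w$1" "0 < \<sigma>"
  using assms unfolding pos_slopes_def S1_def by blast

lemma pos_slopes_pos: "\<sigma> \<in> pos_slopes q a b \<Longrightarrow> 0 < \<sigma>"
  by (auto simp: pos_slopes_def)

lemma pos_slopes_Int_atMost_0: "pos_slopes q a b \<inter> {..0} = {}"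
  using pos_slopes_pos by fastforce

context hecke
begin

text \<open>For \<open>b \<le> 0\<close> the strip vector is \<open>g\<^sub>a\<^sub>,\<^sub>b U\<^sup>j (1,0)\<close> for the last \<open>j\<close> at which its first coordinate
  \<open>a s\<^sub>j\<^sub>+\<^sub>1 + b s\<^sub>j\<close> (with \<open>s\<^sub>k = sin_ratio q k\<close>) is still positive; the Cassini identity for the
  \<open>s\<^sub>k\<close> bounds that coordinate by \<open>a \<le> 1\<close>.\<close>

lemma farey_tri_strip_vector:
  assumes ab: "(a, b) \<in> farey_tri q" and b: "b \<le> 0"
  obtains j where "0 < a * sin_ratio q (int j + 1) + b * sin_ratio q (int j)"
    "a * sin_ratio q (int j + 1) + b * sin_ratio q (int j) \<le> 1" "1 \<le> sin_ratio q (int j)"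
proof -
  have a: "0 < a" "a \<le> 1" "1 - lambda_q q * a < b"
    using ab by (auto simp: farey_tri_def)
  define \<phi> where "\<phi> j = a * sin_ratio q (int j + 1) + b * sin_ratio q (int j)" for j :: nat
  define J where "J = {j. j < q \<and> 0 < \<phi> j}"
  have "1 \<in> J"
    using a q_ge_3 sin_ratio_2 by (simp add: J_def \<phi>_def algebra_simps)
  moreover have "finite J"
    by (simp add: J_def)
  ultimately have j0: "Max J \<in> J" "1 \<le> Max J"
    by (auto intro: Max_in Max_ge)
  define j0 where "j0 = Max J"
  have "\<phi> (q - 1) = b"
  proof -
    have "int (q - 1) + 1 = int q" "int (q - 1) = int q - 1"
      using q_ge_3 by auto
    then show ?thesis
      by (simp add: \<phi>_def sin_ratio_q sin_ratio_q_minus_1)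
  qed
  then have "q - 1 \<notin> J"
    using b by (simp add: J_def)
  then have j0_lt: "j0 + 1 < q"
    using j0 unfolding J_def j0_def by (metis (mono_tags, lifting) Suc_eq_plus1 Suc_lessI diff_Suc_1 mem_Collect_eq)
  then have "j0 + 1 \<notin> J"
    using Max_ge[OF \<open>finite J\<close>, of "j0 + 1"] by (auto simp: j0_def)
  then have next_le: "\<phi> (j0 + 1) \<le> 0"
    using j0_lt by (simp add: J_def)
  have pos: "0 < \<phi> j0"
    using j0 by (simp add: J_def j0_def)
  have s1: "1 \<le> sin_ratio q (int j0 + 1)" and s0: "1 \<le> sin_ratio q (int j0)"
    using j0_lt j0 by (auto simp: j0_def intro!: sin_ratio_ge_1)
  have "sin_ratio q (int j0 + 1) * \<phi> j0 - sin_ratio q (int j0) * \<phi> (j0 + 1) = a"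
    using sin_ratio_Cassini[of "int j0"]
    by (simp add: \<phi>_def algebra_simps power2_eq_square)
  moreover have "sin_ratio q (int j0) * \<phi> (j0 + 1) \<le> 0"
    using s0 next_le by (simp add: mult_nonneg_nonpos)
  moreover have "\<phi> j0 \<le> sin_ratio q (int j0 + 1) * \<phi> j0"
    using s1 pos by simp
  ultimately have "\<phi> j0 \<le> 1"
    using a by linarith
  then show ?thesis
    using that[of j0] pos s0 by (simp add: \<phi>_def)
qed

lemma pos_slopes_nonempty:
  assumes ab: "(a, b) \<in> farey_tri q"
  shows "pos_slopes q a b \<noteq> {}"
proof -
  have a: "0 < a" "b \<le> 1"
    using ab by (auto simp: farey_tri_def)
  show ?thesis
  proof (cases "0 < b")
    case True
    then have "inverse a / b \<in> pos_slopes q a b"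
      using pos_slopes_memI[OF vec2_in_mat_img_g_mat(2)] a by simp
    then show ?thesis
      by blast
  next
    case False
    then obtain j where j: "0 < a * sin_ratio q (int j + 1) + b * sin_ratio q (int j)"
      "a * sin_ratio q (int j + 1) + b * sin_ratio q (int j) \<le> 1" "1 \<le> sin_ratio q (int j)"
      using farey_tri_strip_vector[OF ab] by auto
    define x where "x = a * sin_ratio q (int j + 1) + b * sin_ratio q (int j)"
    have "g_mat a b *v U_iter q j (vec2 1 0) = vec2 x (inverse a * sin_ratio q (int j))"
      by (simp add: x_def U_iter_vec2_1_0 g_mat_mult_vec2)
    then have "vec2 x (inverse a * sin_ratio q (int j)) \<in> mat_img (g_mat a b) (Lambda_q q)"
      using U_iter_in_Lambda_q[OF vec2_1_0_in_Lambda_q] unfolding mat_img_iff by metis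
    moreover have x: "0 < x" "x \<le> 1"
      using j by (simp_all add: x_def)
    moreover have "0 < inverse a * sin_ratio q (int j) / x"
      using j a x by simp
    ultimately have "inverse a * sin_ratio q (int j) / x \<in> pos_slopes q a b"
      using pos_slopes_memI[of "vec2 x (inverse a * sin_ratio q (int j))" a b q] by simp
    then show ?thesis
      by blast
  qed
qed

lemma finite_mat_img_Lambda_q_cball:
  assumes "det A = 1"
  shows "finite (mat_img A (Lambda_q q) \<inter> cball 0 R)"
proof -
  obtain K where K: "0 < K" "\<And>x. norm (adj2 A *v x) \<le> norm x * K"
    using bounded_linear.pos_bounded[OF matrix_vector_mul_bounded_linear] by blast
  have "mat_img A (Lambda_q q) \<inter> cball 0 R \<subseteq> (\<lambda>v. A *v v) ` (Lambda_q q \<inter> cball 0 (R * K))"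
  proof
    fix w
    assume w: "w \<in> mat_img A (Lambda_q q) \<inter> cball 0 R"
    then obtain v where v: "v \<in> Lambda_q q" "w = A *v v"
      by (auto simp: mat_img_iff)
    have "norm v = norm (adj2 A *v w)"
      using v(2) adj2_mult_cancel(2)[OF assms] by simp
    also have "\<dots> \<le> norm w * K"
      by (rule K(2))
    also have "\<dots> \<le> R * K"
      using w K(1) by (intro mult_right_mono) auto
    finally show "w \<in> (\<lambda>v. A *v v) ` (Lambda_q q \<inter> cball 0 (R * K))"
      using v by auto
  qed
  then show ?thesis
    by (rule finite_subset) (intro finite_imageI Lambda_q_finite_cball)
qed

lemma pos_slopes_finite_atMost:
  assumes a: "0 < a"
  shows "finite (pos_slopes q a b \<inter> {..M})"
proof -
  let ?L = "mat_img (g_mat a b) (Lambda_q q) \<inter> cball 0 (1 + \<bar>M\<bar>)"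
  have "pos_slopes q a b \<inter> {..M} \<subseteq> (\<lambda>w. w$2 / w$1) ` ?L"
  proof
    fix \<sigma>
    assume \<sigma>: "\<sigma> \<in> pos_slopes q a b \<inter> {..M}"
    then obtain w where w: "w \<in> mat_img (g_mat a b) (Lambda_q q)" "0 < w$1" "w$1 \<le> 1"
      "\<sigma> = w$2 / w$1" "0 < \<sigma>"
      by (blast elim: pos_slopes_memE)
    then have "w$2 \<le> M * w$1" "0 < w$2"
      using \<sigma>
      by (simp_all add: pos_divide_le_eq zero_less_divide_iff)
    moreover have "M * w$1 \<le> \<bar>M\<bar> * 1"
      using w mult_mono[of M "\<bar>M\<bar>" "w$1" 1] by simp
    ultimately have "\<bar>w$2\<bar> \<le> \<bar>M\<bar>"
      by simp
    then have "norm w \<le> 1 + \<bar>M\<bar>"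
      using norm_le_l1_cart[of w] w by (simp add: sum_2)
    then show "\<sigma> \<in> (\<lambda>w. w$2 / w$1) ` ?L"
      using w(1,4) by (intro image_eqI[where x = w]) auto
  qed
  moreover have "finite ?L"
    using a by (intro finite_mat_img_Lambda_q_cball) (simp add: g_mat_def det_mat2)
  ultimately show ?thesis
    by (rule finite_subset[OF _ finite_imageI])
qed

lemma R_q_least:
  assumes ab: "(a, b) \<in> farey_tri q"
  shows "R_q q a b \<in> pos_slopes q a b" "\<And>t. t \<in> pos_slopes q a b \<Longrightarrow> R_q q a b \<le> t"
proof -
  obtain \<sigma>0 where \<sigma>0: "\<sigma>0 \<in> pos_slopes q a b"
    using pos_slopes_nonempty[OF ab] by blast
  define F where "F = pos_slopes q a b \<inter> {..\<sigma>0}"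
  have "finite F" "\<sigma>0 \<in> F"
    using pos_slopes_finite_atMost ab \<sigma>0 by (auto simp: F_def farey_tri_def)
  then have "Min F \<in> F"
    by (intro Min_in) auto
  have least: "Min F \<in> pos_slopes q a b" "\<forall>t\<in>pos_slopes q a b. Min F \<le> t"
  proof -
    show "Min F \<in> pos_slopes q a b"
      using \<open>Min F \<in> F\<close> by (simp add: F_def)
    show "\<forall>t\<in>pos_slopes q a b. Min F \<le> t"
    proof
      fix t
      assume t: "t \<in> pos_slopes q a b"
      show "Min F \<le> t"
      proof (cases "t \<le> \<sigma>0")
        case True
        then show ?thesis
          using t \<open>finite F\<close> by (simp add: F_def)
      next
        case False
        then show ?thesis
          using Min_le[OF \<open>finite F\<close> \<open>\<sigma>0 \<in> F\<close>] by simp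
      qed
    qed
  qed
  have "R_q q a b = Min F"
    unfolding R_q_def
  proof (rule the_equality)
    fix s
    assume "s \<in> pos_slopes q a b \<and> (\<forall>t\<in>pos_slopes q a b. s \<le> t)"
    then show "s = Min F"
      using least by (meson order_antisym)
  qed (use least in blast)
  then show "R_q q a b \<in> pos_slopes q a b" "\<And>t. t \<in> pos_slopes q a b \<Longrightarrow> R_q q a b \<le> t"
    using least by auto
qed


lemma BCZ_q_eqI:
  assumes cd: "(c, d) \<in> farey_tri q"
    and eq: "mat_img (h_mat (R_q q a b) ** g_mat a b) (Lambda_q q) = mat_img (g_mat c d) (Lambda_q q)"
  shows "BCZ_q q (a, b) = (c, d)"
  unfolding BCZ_q_def case_prod_conv
proof (rule the_equality)
  show "(c, d) \<in> farey_tri q \<and> mat_img (h_mat (R_q q a b) ** g_mat a b) (Lambda_q q)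
    = mat_img (g_mat (fst (c, d)) (snd (c, d))) (Lambda_q q)"
    using assms by simp
next
  fix p
  assume p: "p \<in> farey_tri q \<and> mat_img (h_mat (R_q q a b) ** g_mat a b) (Lambda_q q)
    = mat_img (g_mat (fst p) (snd p)) (Lambda_q q)"
  obtain c' d' where p_eq: "p = (c', d')"
    by (cases p)
  show "p = (c, d)"
    using farey_tri_unique[of c' d' c d] p cd eq by (simp add: p_eq)
qed

lemma BCZ_q_step:
  assumes ab: "(a, b) \<in> farey_tri q"
  shows "BCZ_q q (a, b) \<in> farey_tri q"
    and "mat_img (g_mat (fst (BCZ_q q (a, b))) (snd (BCZ_q q (a, b)))) (Lambda_q q)
      = mat_img (h_mat (R_q q a b) ** g_mat a b) (Lambda_q q)"
proof -
  have a: "0 < a"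
    using ab by (simp add: farey_tri_def)
  obtain w where w: "w \<in> mat_img (g_mat a b) (Lambda_q q)" "0 < w$1" "w$1 \<le> 1"
    "R_q q a b = w$2 / w$1"
    using R_q_least(1)[OF ab] by (rule pos_slopes_memE)
  then have "vec2 (w$1) 0 = h_mat (R_q q a b) *v w"
    by (cases w rule: vec2_cases) (simp add: h_mat_mult_vec2)
  then have hw: "vec2 (w$1) 0 \<in> mat_img (h_mat (R_q q a b) ** g_mat a b) (Lambda_q q)"
    unfolding mat_img_mult mat_img_def[of "h_mat (R_q q a b)"] using w(1) by (rule image_eqI)
  obtain d where d: "(w$1, d) \<in> farey_tri q"
    "mat_img (h_mat (R_q q a b) ** g_mat a b) (Lambda_q q) = mat_img (g_mat (w$1) d) (Lambda_q q)"
    by (rule farey_tri_representative[OF det_h_mat_g_mat[OF a] hw w(2,3)])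
  have "BCZ_q q (a, b) = (w$1, d)"
    using d by (rule BCZ_q_eqI)
  with d show "BCZ_q q (a, b) \<in> farey_tri q"
    and "mat_img (g_mat (fst (BCZ_q q (a, b))) (snd (BCZ_q q (a, b)))) (Lambda_q q)
      = mat_img (h_mat (R_q q a b) ** g_mat a b) (Lambda_q q)"
    by simp_all
qed

end

section \<open>Periodic points of the BCZ map\<close>

lemma h_mat_mult_fst [simp]: "(h_mat \<sigma> *v u)$1 = u$1"
  by (cases u rule: vec2_cases) (simp add: h_mat_mult_vec2)

lemma h_mat_slope: "u$1 \<noteq> 0 \<Longrightarrow> (h_mat \<sigma> *v u)$2 / (h_mat \<sigma> *v u)$1 = u$2 / u$1 - \<sigma>"
  by (cases u rule: vec2_cases) (simp add: h_mat_mult_vec2 field_simps)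

lemma pos_slopes_shift:
  assumes eq: "mat_img (g_mat c d) (Lambda_q q) = mat_img (h_mat \<sigma> ** g_mat a b) (Lambda_q q)"
    and \<sigma>: "0 \<le> \<sigma>"
  shows "pos_slopes q c d = (\<lambda>\<tau>. \<tau> - \<sigma>) ` {\<tau> \<in> pos_slopes q a b. \<sigma> < \<tau>}"
proof -
  have img: "mat_img (g_mat c d) (Lambda_q q) = (\<lambda>u. h_mat \<sigma> *v u) ` mat_img (g_mat a b) (Lambda_q q)"
    unfolding eq mat_img_mult by (simp add: mat_img_def)
  show ?thesis
  proof (intro set_eqI iffI)
    fix x
    assume "x \<in> pos_slopes q c d"
    then obtain w where w: "w \<in> mat_img (g_mat c d) (Lambda_q q)" "0 < w$1" "w$1 \<le> 1" "x = w$2 / w$1" "0 < x"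
      by (rule pos_slopes_memE)
    then obtain u where u: "u \<in> mat_img (g_mat a b) (Lambda_q q)" "w = h_mat \<sigma> *v u"
      unfolding img by blast
    then have u1: "u$1 = w$1" "x = u$2 / u$1 - \<sigma>"
      using h_mat_slope[of u \<sigma>] w by simp_all
    then have "u$2 / u$1 \<in> pos_slopes q a b"
      using u(1) w \<sigma> by (intro pos_slopes_memI) auto
    then show "x \<in> (\<lambda>\<tau>. \<tau> - \<sigma>) ` {\<tau> \<in> pos_slopes q a b. \<sigma> < \<tau>}"
      using u1 w(5) by force
  next
    fix x
    assume "x \<in> (\<lambda>\<tau>. \<tau> - \<sigma>) ` {\<tau> \<in> pos_slopes q a b. \<sigma> < \<tau>}"
    then obtain \<tau> where \<tau>: "x = \<tau> - \<sigma>" "\<tau> \<in> pos_slopes q a b" "\<sigma> < \<tau>"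
      by blast
    then obtain u where u: "u \<in> mat_img (g_mat a b) (Lambda_q q)" "0 < u$1" "u$1 \<le> 1" "\<tau> = u$2 / u$1"
      by (blast elim: pos_slopes_memE)
    have "h_mat \<sigma> *v u \<in> mat_img (g_mat c d) (Lambda_q q)"
      unfolding img using u(1) by blast
    then have "(h_mat \<sigma> *v u)$2 / (h_mat \<sigma> *v u)$1 \<in> pos_slopes q c d"
      using h_mat_slope[of u \<sigma>] u \<tau> by (intro pos_slopes_memI) auto
    then show "x \<in> pos_slopes q c d"
      using h_mat_slope[of u \<sigma>] u \<tau> by simp
  qed
qed

lemma card_Int_atMost_less:
  fixes S :: "'a::linorder set"
  assumes "finite (S \<inter> {..y})" "x < y" "y \<in> S"
  shows "card (S \<inter> {..x}) < card (S \<inter> {..y})"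
proof (rule psubset_card_mono)
  have "S \<inter> {..x} \<subseteq> S \<inter> {..y}"
    using assms(2) by auto
  moreover have "y \<in> S \<inter> {..y}" "y \<notin> S \<inter> {..x}"
    using assms(2,3) by auto
  ultimately show "S \<inter> {..x} \<subset> S \<inter> {..y}"
    by blast
qed (rule assms(1))

context hecke
begin

text \<open>Since \<open>h\<^sub>\<sigma>\<close> lowers every slope by \<open>\<sigma>\<close>, one more step of \<open>BCZ\<^sub>q\<close> moves \<open>\<sigma>\<close> to the next positive
  slope of \<open>g\<^sub>a\<^sub>,\<^sub>b \<Lambda>\<^sub>q \<inter> S\<^sub>1\<close>.\<close>

lemma BCZ_q_iterate:
  assumes ab: "(a, b) \<in> farey_tri q"
  shows "\<exists>c d \<sigma>. (BCZ_q q ^^ n) (a, b) = (c, d) \<and> (c, d) \<in> farey_tri q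
    \<and> mat_img (g_mat c d) (Lambda_q q) = mat_img (h_mat \<sigma> ** g_mat a b) (Lambda_q q)
    \<and> card (pos_slopes q a b \<inter> {..\<sigma>}) = n \<and> (\<sigma> = 0 \<or> \<sigma> \<in> pos_slopes q a b)"
proof (induction n)
  case 0
  show ?case
    using ab pos_slopes_Int_atMost_0 by (intro exI[of _ a] exI[of _ b] exI[of _ 0]) (simp add: h_mat_0)
next
  case (Suc n)
  then obtain c d \<sigma> where cd: "(BCZ_q q ^^ n) (a, b) = (c, d)" "(c, d) \<in> farey_tri q"
    and eq: "mat_img (g_mat c d) (Lambda_q q) = mat_img (h_mat \<sigma> ** g_mat a b) (Lambda_q q)"
    and card: "card (pos_slopes q a b \<inter> {..\<sigma>}) = n" and \<sigma>: "\<sigma> = 0 \<or> \<sigma> \<in> pos_slopes q a b"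
    by blast
  have \<sigma>_nonneg: "0 \<le> \<sigma>"
    using \<sigma> by (auto dest: pos_slopes_pos)
  note shift = pos_slopes_shift[OF eq \<sigma>_nonneg]
  define \<tau>0 where "\<tau>0 = R_q q c d + \<sigma>"
  have \<tau>0: "\<tau>0 \<in> pos_slopes q a b" "\<sigma> < \<tau>0"
    using R_q_least(1)[OF cd(2)] unfolding shift \<tau>0_def by auto
  have \<tau>0_least: "\<tau>0 \<le> \<tau>" if "\<tau> \<in> pos_slopes q a b" "\<sigma> < \<tau>" for \<tau>
    using R_q_least(2)[OF cd(2), of "\<tau> - \<sigma>"] that unfolding shift \<tau>0_def by auto
  have "pos_slopes q a b \<inter> {..\<tau>0} = insert \<tau>0 (pos_slopes q a b \<inter> {..\<sigma>})"
    using \<tau>0 \<tau>0_least by force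
  moreover have "finite (pos_slopes q a b \<inter> {..\<sigma>})"
    using ab by (intro pos_slopes_finite_atMost) (simp add: farey_tri_def)
  ultimately have card_next: "card (pos_slopes q a b \<inter> {..\<tau>0}) = Suc n"
    using \<tau>0(2) card by simp
  have "mat_img (g_mat (fst (BCZ_q q (c, d))) (snd (BCZ_q q (c, d)))) (Lambda_q q)
      = mat_img (h_mat (R_q q c d)) (mat_img (h_mat \<sigma> ** g_mat a b) (Lambda_q q))"
    using BCZ_q_step(2)[OF cd(2)] eq by (simp add: mat_img_mult)
  also have "\<dots> = mat_img (h_mat \<tau>0 ** g_mat a b) (Lambda_q q)"
    by (simp add: \<tau>0_def matrix_mul_assoc h_mat_mult flip: mat_img_mult)
  finally show ?case
    using cd(1) card_next BCZ_q_step(1)[OF cd(2)] \<tau>0(1)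
    by (intro exI[of _ "fst (BCZ_q q (c, d))"] exI[of _ "snd (BCZ_q q (c, d))"] exI[of _ \<tau>0]) simp
qed


lemma periodic_imp_h_invariant:
  assumes ab: "(a, b) \<in> farey_tri q" and n: "1 \<le> n" "(BCZ_q q ^^ n) (a, b) = (a, b)"
  shows "\<exists>s0>0. mat_img (h_mat s0 ** g_mat a b) (Lambda_q q) = mat_img (g_mat a b) (Lambda_q q)"
proof -
  obtain \<sigma> where \<sigma>: "mat_img (g_mat a b) (Lambda_q q) = mat_img (h_mat \<sigma> ** g_mat a b) (Lambda_q q)"
    "card (pos_slopes q a b \<inter> {..\<sigma>}) = n" "\<sigma> = 0 \<or> \<sigma> \<in> pos_slopes q a b"
    using BCZ_q_iterate[OF ab, of n] n(2) by auto
  then have "\<sigma> \<in> pos_slopes q a b"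
    using \<sigma>(2,3) n(1) pos_slopes_Int_atMost_0 by auto
  then show ?thesis
    using \<sigma>(1) pos_slopes_pos by (intro exI[of _ \<sigma>]) simp
qed

lemma h_invariant_slope:
  assumes ab: "(a, b) \<in> farey_tri q" and s0: "0 < s0"
    and eq: "mat_img (h_mat s0 ** g_mat a b) (Lambda_q q) = mat_img (g_mat a b) (Lambda_q q)"
  shows "s0 \<in> pos_slopes q a b"
proof -
  have a: "0 < a" "a \<le> 1"
    using ab by (auto simp: farey_tri_def)
  have "vec2 a 0 \<in> mat_img (h_mat s0) (mat_img (g_mat a b) (Lambda_q q))"
    unfolding mat_img_mult[symmetric] eq by (rule vec2_in_mat_img_g_mat(1))
  then obtain u where u: "u \<in> mat_img (g_mat a b) (Lambda_q q)" "vec2 a 0 = h_mat s0 *v u"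
    unfolding mat_img_def[of "h_mat s0"] by blast
  obtain x y where xy: "u = vec2 x y"
    by (rule vec2_cases)
  then have "x = a" "y = s0 * a"
    using u(2) by (simp_all add: h_mat_mult_vec2 vec2_eq_iff)
  then have "u$1 = a" "u$2 / u$1 = s0"
    using xy a by simp_all
  then show ?thesis
    using pos_slopes_memI[OF u(1)] a s0 by simp
qed

lemma h_invariant_imp_periodic:
  assumes ab: "(a, b) \<in> farey_tri q" and s0: "0 < s0"
    and eq: "mat_img (h_mat s0 ** g_mat a b) (Lambda_q q) = mat_img (g_mat a b) (Lambda_q q)"
  shows "\<exists>n::nat. n \<ge> 1 \<and> (BCZ_q q ^^ n) (a, b) = (a, b)"
proof -
  define N where "N = card (pos_slopes q a b \<inter> {..s0})"
  have s0_slope: "s0 \<in> pos_slopes q a b"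
    by (rule h_invariant_slope[OF ab s0 eq])
  have fin: "finite (pos_slopes q a b \<inter> {..t})" for t
    using ab by (intro pos_slopes_finite_atMost) (simp add: farey_tri_def)
  have "1 \<le> N"
    using s0_slope fin[of s0] by (auto simp: N_def Suc_le_eq card_gt_0_iff)
  obtain c d \<sigma> where cd: "(BCZ_q q ^^ N) (a, b) = (c, d)" "(c, d) \<in> farey_tri q"
    and img: "mat_img (g_mat c d) (Lambda_q q) = mat_img (h_mat \<sigma> ** g_mat a b) (Lambda_q q)"
    and card: "card (pos_slopes q a b \<inter> {..\<sigma>}) = N" and \<sigma>: "\<sigma> = 0 \<or> \<sigma> \<in> pos_slopes q a b"
    using BCZ_q_iterate[OF ab, of N] by blast
  have "\<sigma> = s0"
  proof (rule ccontr)
    assume "\<sigma> \<noteq> s0"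
    then consider "\<sigma> < s0" | "s0 < \<sigma>" "\<sigma> \<in> pos_slopes q a b"
      using \<sigma> s0 by fastforce
    then show False
    proof cases
      case 1
      then show False
        using card_Int_atMost_less[OF fin 1 s0_slope] card by (simp add: N_def)
    next
      case 2
      then show False
        using card_Int_atMost_less[OF fin 2] card by (simp add: N_def)
    qed
  qed
  then have "mat_img (g_mat c d) (Lambda_q q) = mat_img (g_mat a b) (Lambda_q q)"
    using img eq by simp
  then have "(c, d) = (a, b)"
    using farey_tri_unique[OF cd(2) ab] by simp
  then show ?thesis
    using cd(1) \<open>1 \<le> N\<close> by blast
qed

end

definition transvection :: "real \<Rightarrow> real^2 \<Rightarrow> real^2 \<Rightarrow> real^2" where
  "transvection s w x = x + (s * det2 w x) *\<^sub>R w"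

lemma transvection_vec2:
  "transvection s (vec2 w1 w2) (vec2 x1 x2)
    = vec2 (x1 + s * (w1 * x2 - w2 * x1) * w1) (x2 + s * (w1 * x2 - w2 * x1) * w2)"
  by (simp add: transvection_def det2_def vec_eq_iff forall_2)

lemma h_mat_g_mat_transvection:
  "0 < a \<Longrightarrow> h_mat s *v (g_mat a b *v x) = g_mat a b *v transvection s (vec2 (-b) a) x"
  by (cases x rule: vec2_cases) (simp add: transvection_vec2 g_mat_mult_vec2 h_mat_mult_vec2 vec2_eq_iff field_simps)

lemma matrix_vector_mult_transvection:
  "det M = 1 \<Longrightarrow> M *v transvection s w x = transvection s (M *v w) (M *v x)"
  by (simp add: transvection_def det2_matrix_vector_mult matrix_vector_right_distrib matrix_vector_mult_scaleR)

lemma transvection_scaleR: "transvection s (t *\<^sub>R w) x = transvection (s * t\<^sup>2) w x"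
  by (cases w rule: vec2_cases, cases x rule: vec2_cases)
    (simp add: transvection_vec2 vec2_eq_iff power2_eq_square algebra_simps scaleR_vec2)

lemma T_mat_conj_transvection:
  assumes "det M = 1"
  shows "M *v (T_mat q *v (adj2 M *v x)) = transvection (lambda_q q) (M *v vec2 1 0) x"
proof -
  have T: "T_mat q *v y = transvection (lambda_q q) (vec2 1 0) y" for y
    by (cases y rule: vec2_cases) (simp add: T_mat_mult_vec2 transvection_vec2)
  have "M *v (T_mat q *v (adj2 M *v x)) = M *v transvection (lambda_q q) (vec2 1 0) (adj2 M *v x)"
    by (simp add: T)
  also have "\<dots> = transvection (lambda_q q) (M *v vec2 1 0) x"
    using assms by (simp add: matrix_vector_mult_transvection adj2_mult_cancel)
  finally show ?thesis .
qed

context hecke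
begin

lemma slope_imp_h_invariant:
  assumes ab: "(a, b) \<in> farey_tri q" and v: "v \<in> Lambda_q q" "v$2 \<noteq> 0" "b / a = v$1 / v$2"
  shows "\<exists>s0>0. mat_img (h_mat s0 ** g_mat a b) (Lambda_q q) = mat_img (g_mat a b) (Lambda_q q)"
proof -
  have a: "0 < a"
    using ab by (simp add: farey_tri_def)
  obtain M where M: "M \<in> G_q q" "vec2 (- v$1) (v$2) = M *v vec2 1 0"
    using Lambda_q_reflect[of "v$1" "v$2"] v(1) by (auto simp: vec2_eta Lambda_q_iff)
  define s0 where "s0 = lambda_q q * (v$2 / a)\<^sup>2"
  have s0: "0 < s0"
    using a v(2) lambda_q_pos by (simp add: s0_def)
  have w: "vec2 (-b) a = (a / v$2) *\<^sub>R (M *v vec2 1 0)"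
    using M(2)[symmetric] v(2,3) a by (simp add: scaleR_vec2 vec2_eq_iff field_simps)
  have eqN: "h_mat s0 ** g_mat a b = g_mat a b ** (M ** T_mat q ** adj2 M)"
  proof (rule matrix_eq[THEN iffD2], rule allI)
    fix x
    have "(h_mat s0 ** g_mat a b) *v x = g_mat a b *v transvection (s0 * (a / v$2)\<^sup>2) (M *v vec2 1 0) x"
      by (simp add: h_mat_g_mat_transvection[OF a] w transvection_scaleR flip: matrix_vector_mul_assoc)
    also have "s0 * (a / v$2)\<^sup>2 = lambda_q q"
      using a v(2) by (simp add: s0_def power_divide field_simps)
    finally show "(h_mat s0 ** g_mat a b) *v x = (g_mat a b ** (M ** T_mat q ** adj2 M)) *v x"
      by (simp add: T_mat_conj_transvection[OF det_G_q[OF M(1)]] flip: matrix_vector_mul_assoc)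
  qed
  moreover have "M ** T_mat q ** adj2 M \<in> G_q q"
    by (intro G_q_mult M(1) T_mat_in_G_q adj2_in_G_q)
  ultimately show ?thesis
    using s0 by (intro exI[of _ s0]) (simp add: mat_img_mult[of "g_mat a b"] mat_img_G_q)
qed

end

lemma h_invariant_transvection_in_Lambda_q:
  assumes a: "0 < a"
    and eq: "mat_img (h_mat s0 ** g_mat a b) (Lambda_q q) = mat_img (g_mat a b) (Lambda_q q)"
    and x: "x \<in> Lambda_q q"
  shows "transvection s0 (vec2 (-b) a) x \<in> Lambda_q q"
proof -
  have "g_mat a b *v transvection s0 (vec2 (-b) a) x \<in> mat_img (h_mat s0 ** g_mat a b) (Lambda_q q)"
    using x by (auto simp: mat_img_iff h_mat_g_mat_transvection[OF a] simp flip: matrix_vector_mul_assoc)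
  then obtain y where "y \<in> Lambda_q q" "g_mat a b *v transvection s0 (vec2 (-b) a) x = g_mat a b *v y"
    unfolding eq mat_img_iff by blast
  then show ?thesis
    using g_mat_inj[OF a] by metis
qed

context hecke
begin

lemma transvection_orbit_gap:
  assumes P: "\<And>x. x \<in> Lambda_q q \<Longrightarrow> transvection s0 w x \<in> Lambda_q q"
    and s0: "0 < s0" and M: "M \<in> G_q q"
  shows "(M *v w)$2 = 0 \<or> 1 \<le> s0 * ((M *v w)$2)\<^sup>2"
proof -
  let ?u = "M *v w"
  have "M *v transvection s0 w (adj2 M *v vec2 1 0) \<in> Lambda_q q"
    using G_q_mult_Lambda_q[OF adj2_in_G_q[OF M] vec2_1_0_in_Lambda_q]
    by (intro P G_q_mult_Lambda_q[OF M])
  also have "M *v transvection s0 w (adj2 M *v vec2 1 0) = transvection s0 ?u (vec2 1 0)"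
    using det_G_q[OF M] by (simp add: matrix_vector_mult_transvection adj2_mult_cancel)
  finally have "(transvection s0 ?u (vec2 1 0))$2 = 0 \<or> 1 \<le> \<bar>(transvection s0 ?u (vec2 1 0))$2\<bar>"
    by (rule Lambda_q_snd_gap)
  moreover have "(transvection s0 ?u (vec2 1 0))$2 = - (s0 * (?u$2)\<^sup>2)"
    by (simp add: transvection_def det2_def power2_eq_square)
  ultimately show ?thesis
    using s0 by (auto simp: abs_mult)
qed

lemma snd_descent:
  assumes S: "\<And>z. z \<in> X \<Longrightarrow> S_mat *v z \<in> X"
    and T: "\<And>z. z \<in> X \<Longrightarrow> T_mat q *v z \<in> X" and T_inv: "\<And>z. z \<in> X \<Longrightarrow> T_inv q *v z \<in> X"
    and u: "u \<in> X"
  shows "\<exists>u'\<in>X. \<bar>u'$2\<bar> \<le> (lambda_q q / 2) ^ k * \<bar>u$2\<bar>"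
proof (induction k)
  case 0
  show ?case
    using u by auto
next
  case (Suc k)
  then obtain u' where u': "u' \<in> X" "\<bar>u'$2\<bar> \<le> (lambda_q q / 2) ^ k * \<bar>u$2\<bar>"
    by blast
  show ?case
  proof (cases "u'$2 = 0")
    case True
    then show ?thesis
      using u'(1) lambda_q_pos by (intro bexI[of _ u']) auto
  next
    case False
    obtain x y where xy: "u' = vec2 x y"
      by (rule vec2_cases)
    define n where "n = round (- x / (lambda_q q * y))"
    have "x + of_int n * lambda_q q * y = (lambda_q q * y) * (of_int n - (- x / (lambda_q q * y)))"
      using False xy lambda_q_pos by (simp add: field_simps)
    then have "\<bar>x + of_int n * lambda_q q * y\<bar> = lambda_q q * \<bar>y\<bar> * \<bar>of_int n - (- x / (lambda_q q * y))\<bar>"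
      using lambda_q_pos by (simp add: abs_mult)
    also have "\<dots> \<le> lambda_q q * \<bar>y\<bar> * (1 / 2)"
      using of_int_round_abs_le[of "- x / (lambda_q q * y)"] lambda_q_pos
      by (intro mult_left_mono) (auto simp: n_def)
    also have "\<dots> \<le> lambda_q q / 2 * ((lambda_q q / 2) ^ k * \<bar>u$2\<bar>)"
      using u' xy lambda_q_pos by simp
    finally have "\<bar>(S_mat *v vec2 (x + of_int n * lambda_q q * y) y)$2\<bar> \<le> (lambda_q q / 2) ^ Suc k * \<bar>u$2\<bar>"
      by (simp add: S_mat_mult_vec2)
    moreover have "S_mat *v vec2 (x + of_int n * lambda_q q * y) y \<in> X"
      using u' xy by (intro S vec2_shift_mem[OF T T_inv]) auto
    ultimately show ?thesis
      by blast
  qed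
qed

lemma h_invariant_imp_slope:
  assumes ab: "(a, b) \<in> farey_tri q" and s0: "0 < s0"
    and eq: "mat_img (h_mat s0 ** g_mat a b) (Lambda_q q) = mat_img (g_mat a b) (Lambda_q q)"
  shows "\<exists>v \<in> Lambda_q q. v$2 \<noteq> 0 \<and> b / a = v$1 / v$2"
proof -
  have a: "0 < a"
    using ab by (simp add: farey_tri_def)
  define w where "w = vec2 (-b) a"
  define X where "X = (\<lambda>M. M *v w) ` G_q q"
  have X_closed: "N *v u \<in> X" if "N \<in> G_q q" "u \<in> X" for N u
    using that by (auto simp: X_def matrix_vector_mul_assoc G_q_mult)
  have "w \<in> X"
    using G_q.G_id[of q] by (force simp: X_def)
  obtain k where k: "(lambda_q q / 2) ^ k < 1 / (a * (s0 + 1))"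
    using real_arch_pow_inv[of "1 / (a * (s0 + 1))" "lambda_q q / 2"] a s0 lambda_q_less_2 by auto
  obtain u where u: "u \<in> X" "\<bar>u$2\<bar> \<le> (lambda_q q / 2) ^ k * a"
    using snd_descent[OF X_closed[OF S_mat_in_G_q] X_closed[OF T_mat_in_G_q] X_closed[OF T_inv_in_G_q]
        \<open>w \<in> X\<close>, of k]
      a by (auto simp: w_def)
  obtain M where M: "M \<in> G_q q" "u = M *v w"
    using u(1) by (auto simp: X_def)
  have "\<bar>u$2\<bar> < 1 / (a * (s0 + 1)) * a"
    using u(2) mult_strict_right_mono[OF k a] by linarith
  then have small: "\<bar>u$2\<bar> < 1 / (s0 + 1)"
    using a by simp
  have "u$2 = 0"
  proof (rule ccontr)
    assume "u$2 \<noteq> 0"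
    then have gap: "1 \<le> s0 * (u$2)\<^sup>2"
      using transvection_orbit_gap[OF h_invariant_transvection_in_Lambda_q[OF a eq] s0 M(1)] M(2)
      by (simp add: w_def)
    have "1 / (s0 + 1) \<le> 1"
      using s0 by simp
    then have "\<bar>u$2\<bar> * \<bar>u$2\<bar> \<le> \<bar>u$2\<bar> * 1"
      using small by (intro mult_left_mono) auto
    then have "s0 * (u$2)\<^sup>2 \<le> s0 * \<bar>u$2\<bar>"
      using s0 by (simp add: power2_eq_square)
    also have "\<dots> < s0 * (1 / (s0 + 1))"
      by (rule mult_strict_left_mono[OF small s0])
    also have "\<dots> < 1"
      using s0 by (simp add: field_simps)
    finally show False
      using gap by simp
  qed
  define v where "v = adj2 M *v vec2 1 0"
  have v: "v \<in> Lambda_q q"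
    unfolding v_def by (rule G_q_mult_Lambda_q[OF adj2_in_G_q[OF M(1)] vec2_1_0_in_Lambda_q])
  have "w = adj2 M *v u"
    using M adj2_mult_cancel(2)[OF det_G_q[OF M(1)]] by simp
  also have "u = (u$1) *\<^sub>R vec2 1 0"
    using \<open>u$2 = 0\<close> by (cases u rule: vec2_cases) (simp add: scaleR_vec2)
  finally have wb: "b = - (u$1 * v$1)" "a = u$1 * v$2"
    by (simp_all add: v_def w_def matrix_vector_mult_scaleR vec_eq_iff forall_2)
  then have "u$1 \<noteq> 0" "v$2 \<noteq> 0"
    using a by auto
  then have "v$2 \<noteq> 0" "b / a = (- v$1) / v$2"
    using wb by (simp_all add: field_simps)
  moreover have "vec2 (- v$1) (v$2) \<in> Lambda_q q"
    using Lambda_q_reflect[of "v$1" "v$2"] v by (simp add: vec2_eta)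
  ultimately show ?thesis
    by (intro bexI[of _ "vec2 (- v$1) (v$2)"]) auto
qed

end

theorem mainTheorem7:
  fixes q :: nat and a b :: real
  assumes "q \<ge> 3" and "(a, b) \<in> farey_tri q"
  shows "((\<exists>n::nat. n \<ge> 1 \<and> (BCZ_q q ^^ n) (a, b) = (a, b))
          \<longleftrightarrow> (\<exists>s0 > 0. mat_img (h_mat s0 ** g_mat a b) (Lambda_q q) = mat_img (g_mat a b) (Lambda_q q)))
       \<and> ((\<exists>s0 > 0. mat_img (h_mat s0 ** g_mat a b) (Lambda_q q) = mat_img (g_mat a b) (Lambda_q q))
          \<longleftrightarrow> (\<exists>v \<in> Lambda_q q. v$2 \<noteq> 0 \<and> b / a = v$1 / v$2))"
proof -
  interpret hecke q
    using assms(1) by unfold_locales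
  show ?thesis
    using periodic_imp_h_invariant[OF assms(2)] h_invariant_imp_periodic[OF assms(2)]
      h_invariant_imp_slope[OF assms(2)] slope_imp_h_invariant[OF assms(2)]
    by blast
qed

end
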